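(* Fix $I_{ij},I_{jk},I_{ki}\in[0,\infty)$. Consider the set $$\mathcal{R}_H^{ijk}=\{(r_i,r_j,r_k)\in\mathbb{R}^3_{>0}:\ l_{ij},l_{jk},l_{ki}\text{ satisfy the strict triangle inequalities}\},$$ where $l_{ij},l_{jk},l_{ki}>0$ are given by $$\cosh l_{ij}=\cosh r_i\cosh r_j+I_{ij}\sinh r_i\sinh r_j,$$ $$\cosh l_{jk}=\cosh r_j\cosh r_k+I_{jk}\sinh r_j\sinh r_k,$$ $$\cosh l_{ki}=\cosh r_k\cosh r_i+I_{ki}\sinh r_k\sinh r_i.$$ Then $\mathcal{R}_H^{ijk}$ is a connected and simply connected open subset of $\mathbb{R}^3_{>0}$. *)

theory Defs
  imports "HOL-Analysis.Analysis"
begin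

definition hyp_edge :: "real \<Rightarrow> real \<Rightarrow> real \<Rightarrow> real" where
  "hyp_edge I a b = arcosh (cosh a * cosh b + I * sinh a * sinh b)"

definition strict_triangle :: "real \<Rightarrow> real \<Rightarrow> real \<Rightarrow> bool" where
  "strict_triangle x y z \<longleftrightarrow> x < y + z \<and> y < z + x \<and> z < x + y"

definition R_H :: "real \<Rightarrow> real \<Rightarrow> real \<Rightarrow> (real \<times> real \<times> real) set" where
  "R_H Iij Ijk Iki = {(ri, rj, rk). ri > 0 \<and> rj > 0 \<and> rk > 0 \<and>
      strict_triangle (hyp_edge Iij ri rj) (hyp_edge Ijk rj rk) (hyp_edge Iki rk ri)}"

end

theory Submission
  imports Defs
begin

(*
  Openness: R_H is cut out of the open positive octant by strict inequalities
  between continuous functions.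

  Contractibility rests on the rescaling
    rescale m (r_i, r_j, r_k) = (arsinh (m sinh r_i), arsinh (m sinh r_j), arsinh (m sinh r_k)).
  (1) For m >= 1 it maps R_H into itself, and
  (2) R_H contains the open box in which every sinh r exceeds 1 + I_ij + I_jk + I_ki.
  Both follow from rewriting a single triangle inequality, via the addition law
  for cosh, as an inequality [reduced_triangle] in the variables coth r and 1/sinh r:
  rescaling by m divides all of these variables by at least m, which preserves the
  inequality (fact 1), and when sinh of the common vertex is large the left-hand
  side becomes negative (fact 2).  Increasing m continuously from 1 to a
  radius-dependent bound deforms the identity of R_H into a map with values in
  the convex box, which a straight-line homotopy contracts to a point.
*)

section \<open>The triangle inequality in reduced coordinates\<close>

text \<open>With p = coth x, q = coth y, w = coth z and u = 1/sinh x, the strict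
  inequality between the edge yz and the sum of the edges xy and zx is
  equivalent to the following condition (lemma hyp_edge_triangle_iff).\<close>

definition reduced_triangle ::
    "real \<Rightarrow> real \<Rightarrow> real \<Rightarrow> real \<Rightarrow> real \<Rightarrow> real \<Rightarrow> real \<Rightarrow> bool" where
  "reduced_triangle a b e p q w u \<longleftrightarrow>
     b * u\<^sup>2 - q * w - p * (e * q + a * w) - a * e
       < sqrt ((u\<^sup>2 + q\<^sup>2 + 2 * a * p * q + a\<^sup>2) * (u\<^sup>2 + w\<^sup>2 + 2 * e * p * w + e\<^sup>2))"

lemma less_sqrt_product_rescale:
  fixes T L L' N1 N2 N1' N2' :: real
  assumes T: "T > 0" and L: "L < sqrt (N1 * N2)" "T * L' \<le> L"
    and N: "0 \<le> N1" "0 \<le> N2" "N1 \<le> T * N1'" "N2 \<le> T * N2'"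
  shows "L' < sqrt (N1' * N2')"
proof -
  have "T * L' < sqrt (N1 * N2)" using L by linarith
  also have "\<dots> \<le> sqrt ((T * N1') * (T * N2'))"
    using N by (intro real_sqrt_le_mono mult_mono) auto
  also have "\<dots> = T * sqrt (N1' * N2')"
    using T by (simp add: real_sqrt_mult ac_simps)
  finally show ?thesis using T by simp
qed

lemma reduced_triangle_rescale:
  fixes a b e p q w u p' q' w' u' m :: real
  assumes abe: "a \<ge> 0" "b \<ge> 0" "e \<ge> 0"
    and pqw: "p \<ge> 0" "q \<ge> 0" "w \<ge> 0" and m: "m \<ge> 1"
    and scaled: "p \<le> m * p'" "q \<le> m * q'" "w \<le> m * w'" "m * u' = u"
    and H: "reduced_triangle a b e p q w u"
  shows "reduced_triangle a b e p' q' w' u'"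
proof -
  define P Q W T where "P = m * p'" and "Q = m * q'" and "W = m * w'" and "T = m\<^sup>2"
  have T1: "T \<ge> 1" using m by (simp add: T_def one_le_power)
  have PQ: "p * q \<le> P * Q" and PW: "p * w \<le> P * W" and QW: "q * w \<le> Q * W"
    using scaled pqw by (auto simp: P_def Q_def W_def intro!: mult_mono)
  have QQ: "q\<^sup>2 \<le> Q\<^sup>2" and WW: "w\<^sup>2 \<le> W\<^sup>2"
    using scaled pqw by (auto simp: Q_def W_def intro!: power_mono)
  have u: "u\<^sup>2 = T * u'\<^sup>2" using scaled(4) by (auto simp: T_def power_mult_distrib)
  have TL: "T * (b * u'\<^sup>2 - q' * w' - p' * (e * q' + a * w') - a * e)
      = b * u\<^sup>2 - Q * W - e * (P * Q) - a * (P * W) - T * (a * e)"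
    unfolding u P_def Q_def W_def T_def by (simp add: algebra_simps power2_eq_square)
  have TN1: "T * (u'\<^sup>2 + q'\<^sup>2 + 2 * a * p' * q' + a\<^sup>2) = u\<^sup>2 + Q\<^sup>2 + 2 * a * (P * Q) + T * a\<^sup>2"
    unfolding u P_def Q_def T_def by (simp add: algebra_simps power2_eq_square)
  have TN2: "T * (u'\<^sup>2 + w'\<^sup>2 + 2 * e * p' * w' + e\<^sup>2) = u\<^sup>2 + W\<^sup>2 + 2 * e * (P * W) + T * e\<^sup>2"
    unfolding u P_def W_def T_def by (simp add: algebra_simps power2_eq_square)
  have ae: "a * e \<le> T * (a * e)" "a\<^sup>2 \<le> T * a\<^sup>2" "e\<^sup>2 \<le> T * e\<^sup>2"
    using T1 abe by (auto intro: mult_right_mono[of 1 T, simplified])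
  have mono: "e * (p * q) \<le> e * (P * Q)" "a * (p * w) \<le> a * (P * W)"
       "a * (p * q) \<le> a * (P * Q)" "e * (p * w) \<le> e * (P * W)"
    using PQ PW abe by (auto intro: mult_left_mono)
  have expand: "p * (e * q + a * w) = e * (p * q) + a * (p * w)"
    "2 * a * p * q = 2 * (a * (p * q))" "2 * e * p * w = 2 * (e * (p * w))"
    by (simp_all add: algebra_simps)
  have "T * (b * u'\<^sup>2 - q' * w' - p' * (e * q' + a * w') - a * e)
      \<le> b * u\<^sup>2 - q * w - p * (e * q + a * w) - a * e"
    unfolding TL expand(1) using ae(1) mono(1,2) QW by linarith
  moreover have "u\<^sup>2 + q\<^sup>2 + 2 * a * p * q + a\<^sup>2 \<le> T * (u'\<^sup>2 + q'\<^sup>2 + 2 * a * p' * q' + a\<^sup>2)"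
    unfolding TN1 expand(2) using ae(2) mono(3) QQ by linarith
  moreover have "u\<^sup>2 + w\<^sup>2 + 2 * e * p * w + e\<^sup>2 \<le> T * (u'\<^sup>2 + w'\<^sup>2 + 2 * e * p' * w' + e\<^sup>2)"
    unfolding TN2 expand(3) using ae(3) mono(4) WW by linarith
  moreover have "0 \<le> u\<^sup>2 + q\<^sup>2 + 2 * a * p * q + a\<^sup>2" "0 \<le> u\<^sup>2 + w\<^sup>2 + 2 * e * p * w + e\<^sup>2"
    using abe pqw by simp_all
  ultimately show ?thesis
    using H T1 less_sqrt_product_rescale[of T] unfolding reduced_triangle_def by simp
qed

lemma hyp_edge_arg_ge_1:
  fixes a x y :: real
  assumes "a \<ge> 0" "x \<ge> 0" "y \<ge> 0"
  shows "1 \<le> cosh x * cosh y + a * sinh x * sinh y"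
proof -
  have "1 \<le> cosh x * cosh y"
    using cosh_real_ge_1[of x] cosh_real_ge_1[of y] by (metis mult_mono mult_1 order_trans zero_le_one)
  moreover have "a * sinh x * sinh y \<ge> 0" using assms by simp
  ultimately show ?thesis by linarith
qed

text \<open>The addition law for cosh turns a triangle inequality between arcosh values
  into an algebraic one.\<close>

lemma arcosh_less_add_iff:
  fixes A B C :: real
  assumes "A \<ge> 1" "B \<ge> 1" "C \<ge> 1"
  shows "arcosh B < arcosh A + arcosh C \<longleftrightarrow> B < A * C + sqrt (A\<^sup>2 - 1) * sqrt (C\<^sup>2 - 1)"
proof -
  have "arcosh B < arcosh A + arcosh C \<longleftrightarrow> cosh (arcosh B) < cosh (arcosh A + arcosh C)"
    using assms by (intro cosh_real_nonneg_less_iff[symmetric]) auto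
  also have "\<dots> \<longleftrightarrow> B < A * C + sqrt (A\<^sup>2 - 1) * sqrt (C\<^sup>2 - 1)"
    using assms by (simp add: cosh_add sinh_arcosh_real)
  finally show ?thesis .
qed

text \<open>The next two identities express cosh^2 l - 1 and cosh l_yz - cosh l_xy cosh l_zx
  in the reduced coordinates.  They are stated for X, Y, Z and hx, hy, hz standing for
  cosh and sinh of x, y, z; only the relation cosh^2 = sinh^2 + 1 is used.\<close>

lemma cosh_law_sq_minus_1:
  fixes a X Y hx hy :: real
  assumes "hx \<noteq> 0" "hy \<noteq> 0" "X\<^sup>2 = hx\<^sup>2 + 1" "Y\<^sup>2 = hy\<^sup>2 + 1"
  shows "(X * Y + a * hx * hy)\<^sup>2 - 1
     = (hx * hy)\<^sup>2 * ((1 / hx)\<^sup>2 + (Y / hy)\<^sup>2 + 2 * a * (X / hx) * (Y / hy) + a\<^sup>2)"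
proof -
  have "(hx * hy)\<^sup>2 * ((1 / hx)\<^sup>2 + (Y / hy)\<^sup>2 + 2 * a * (X / hx) * (Y / hy) + a\<^sup>2)
      = hy\<^sup>2 + hx\<^sup>2 * Y\<^sup>2 + 2 * a * X * Y * hx * hy + a\<^sup>2 * hx\<^sup>2 * hy\<^sup>2"
    using assms(1,2) by (simp add: field_simps power2_eq_square)
  also have "\<dots> = (X * Y + a * hx * hy)\<^sup>2 - 1" using assms(3,4) by algebra
  finally show ?thesis ..
qed

lemma cosh_law_difference:
  fixes a b e X Y Z hx hy hz :: real
  assumes "hx \<noteq> 0" "hy \<noteq> 0" "hz \<noteq> 0" "X\<^sup>2 = hx\<^sup>2 + 1"
  shows "(Y * Z + b * hy * hz) - (X * Y + a * hx * hy) * (X * Z + e * hx * hz)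
     = (hx\<^sup>2 * hy * hz) * (b * (1 / hx)\<^sup>2 - (Y / hy) * (Z / hz)
         - (X / hx) * (e * (Y / hy) + a * (Z / hz)) - a * e)"
proof -
  have "(hx\<^sup>2 * hy * hz) * (b * (1 / hx)\<^sup>2 - (Y / hy) * (Z / hz)
         - (X / hx) * (e * (Y / hy) + a * (Z / hz)) - a * e)
      = b * hy * hz - hx\<^sup>2 * Y * Z - X * hx * (e * Y * hz + a * Z * hy) - a * e * hx\<^sup>2 * hy * hz"
    using assms(1-3) by (simp add: field_simps power2_eq_square)
  also have "\<dots> = (Y * Z + b * hy * hz) - (X * Y + a * hx * hy) * (X * Z + e * hx * hz)"
    using assms(4) by algebra
  finally show ?thesis ..
qed

lemma hyp_edge_triangle_iff:
  fixes a b e x y z :: real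
  assumes abe: "a \<ge> 0" "b \<ge> 0" "e \<ge> 0" and xyz: "x > 0" "y > 0" "z > 0"
  shows "hyp_edge b y z < hyp_edge a x y + hyp_edge e z x \<longleftrightarrow>
    reduced_triangle a b e (cosh x / sinh x) (cosh y / sinh y) (cosh z / sinh z) (1 / sinh x)"
proof -
  define p q w u where "p = cosh x / sinh x" and "q = cosh y / sinh y"
    and "w = cosh z / sinh z" and "u = 1 / sinh x"
  define A B C where "A = cosh x * cosh y + a * sinh x * sinh y"
    and "B = cosh y * cosh z + b * sinh y * sinh z" and "C = cosh x * cosh z + e * sinh x * sinh z"
  define N1 N2 where "N1 = u\<^sup>2 + q\<^sup>2 + 2 * a * p * q + a\<^sup>2" and "N2 = u\<^sup>2 + w\<^sup>2 + 2 * e * p * w + e\<^sup>2"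
  define L where "L = b * u\<^sup>2 - q * w - p * (e * q + a * w) - a * e"
  define G where "G = sinh x ^ 2 * sinh y * sinh z"
  have sh: "sinh x > 0" "sinh y > 0" "sinh z > 0" using xyz by auto
  have pqw: "p > 0" "q > 0" "w > 0" using xyz by (auto simp: p_def q_def w_def)
  have A1: "A \<ge> 1" and B1: "B \<ge> 1" and C1: "C \<ge> 1"
    unfolding A_def B_def C_def using abe xyz by (auto intro: hyp_edge_arg_ge_1)
  have "A\<^sup>2 - 1 = (sinh x * sinh y)\<^sup>2 * N1"
    unfolding A_def N1_def p_def q_def u_def
    by (rule cosh_law_sq_minus_1) (use sh in \<open>simp_all add: cosh_square_eq\<close>)
  moreover have "C\<^sup>2 - 1 = (sinh x * sinh z)\<^sup>2 * N2"
    unfolding C_def N2_def p_def w_def u_def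
    by (rule cosh_law_sq_minus_1) (use sh in \<open>simp_all add: cosh_square_eq\<close>)
  moreover have "N1 \<ge> 0" "N2 \<ge> 0" using pqw abe by (auto simp: N1_def N2_def)
  ultimately have root: "sqrt (A\<^sup>2 - 1) * sqrt (C\<^sup>2 - 1) = G * sqrt (N1 * N2)"
    using sh by (simp add: G_def real_sqrt_mult power2_eq_square)
  have diff: "B - A * C = G * L"
    unfolding A_def B_def C_def G_def L_def p_def q_def w_def u_def
    by (rule cosh_law_difference) (use sh in \<open>simp_all add: cosh_square_eq\<close>)
  have "hyp_edge b y z < hyp_edge a x y + hyp_edge e z x \<longleftrightarrow> arcosh B < arcosh A + arcosh C"
    by (simp add: hyp_edge_def A_def B_def C_def ac_simps)
  also have "\<dots> \<longleftrightarrow> G * L < G * sqrt (N1 * N2)"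
    using arcosh_less_add_iff[OF A1 B1 C1] root diff by (simp add: algebra_simps)
  also have "\<dots> \<longleftrightarrow> L < sqrt (N1 * N2)"
    using sh by (simp add: G_def)
  finally show ?thesis
    by (simp add: reduced_triangle_def L_def N1_def N2_def p_def q_def w_def u_def)
qed

section \<open>Rescaling the radii\<close>

definition rescale_radius :: "real \<Rightarrow> real \<Rightarrow> real" where
  "rescale_radius m t = arsinh (m * sinh t)"

lemma rescale_radius_facts:
  fixes m t :: real
  assumes m: "m \<ge> 1" and t: "t > 0"
  shows "rescale_radius m t > 0" and "sinh (rescale_radius m t) = m * sinh t"
    and "cosh t / sinh t \<le> m * (cosh (rescale_radius m t) / sinh (rescale_radius m t))"
proof -
  have st: "sinh t > 0" using t by simp
  show pos: "rescale_radius m t > 0" and sh: "sinh (rescale_radius m t) = m * sinh t"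
    using st m by (simp_all add: rescale_radius_def)
  have "sinh t \<le> sinh (rescale_radius m t)" using sh m st by (simp add: mult_right_mono[of 1 m, simplified])
  hence "t \<le> rescale_radius m t" by (simp only: sinh_real_le_iff)
  hence "cosh t \<le> cosh (rescale_radius m t)" using t by (simp add: cosh_real_nonneg_le_iff)
  hence "cosh t / sinh t \<le> cosh (rescale_radius m t) / sinh t" using st by (simp add: divide_right_mono)
  also have "\<dots> = m * (cosh (rescale_radius m t) / sinh (rescale_radius m t))"
    using m st by (simp add: sh field_simps)
  finally show "cosh t / sinh t \<le> m * (cosh (rescale_radius m t) / sinh (rescale_radius m t))" .
qed

lemma hyp_edge_triangle_rescale:
  fixes a b e x y z m :: real
  assumes abe: "a \<ge> 0" "b \<ge> 0" "e \<ge> 0" and xyz: "x > 0" "y > 0" "z > 0" and m: "m \<ge> 1"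
    and H: "hyp_edge b y z < hyp_edge a x y + hyp_edge e z x"
  shows "hyp_edge b (rescale_radius m y) (rescale_radius m z)
     < hyp_edge a (rescale_radius m x) (rescale_radius m y) + hyp_edge e (rescale_radius m z) (rescale_radius m x)"
proof -
  note fx = rescale_radius_facts[OF m xyz(1)] and fy = rescale_radius_facts[OF m xyz(2)]
    and fz = rescale_radius_facts[OF m xyz(3)]
  have "reduced_triangle a b e (cosh x / sinh x) (cosh y / sinh y) (cosh z / sinh z) (1 / sinh x)"
    using hyp_edge_triangle_iff[OF abe xyz] H by simp
  moreover have "m * (1 / sinh (rescale_radius m x)) = 1 / sinh x" using fx(2) m xyz by simp
  ultimately have "reduced_triangle a b e
      (cosh (rescale_radius m x) / sinh (rescale_radius m x))
      (cosh (rescale_radius m y) / sinh (rescale_radius m y))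
      (cosh (rescale_radius m z) / sinh (rescale_radius m z)) (1 / sinh (rescale_radius m x))"
    using xyz by (intro reduced_triangle_rescale[OF abe _ _ _ m fx(3) fy(3) fz(3)]) auto
  thus ?thesis using hyp_edge_triangle_iff[OF abe fx(1) fy(1) fz(1)] by simp
qed

text \<open>A triangle inequality holds as soon as sinh of the common vertex of the two
  summed edges exceeds 1 + b: then the left side of the reduced inequality is negative.\<close>

lemma hyp_edge_triangle_large:
  fixes a b e x y z :: real
  assumes abe: "a \<ge> 0" "b \<ge> 0" "e \<ge> 0" and xyz: "x > 0" "y > 0" "z > 0"
    and large: "sinh x > 1 + b"
  shows "hyp_edge b y z < hyp_edge a x y + hyp_edge e z x"
proof -
  define p q w u where "p = cosh x / sinh x" and "q = cosh y / sinh y"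
    and "w = cosh z / sinh z" and "u = 1 / sinh x"
  have q1: "q > 1" "w > 1"
    using xyz sinh_less_cosh_real[of y] sinh_less_cosh_real[of z] by (auto simp: q_def w_def)
  have p0: "p > 0" using xyz by (simp add: p_def)
  have "sinh x * 1 \<le> sinh x * sinh x" using large abe xyz by (intro mult_left_mono) auto
  hence "b < (sinh x)\<^sup>2" using large by (simp add: power2_eq_square)
  hence "b * u\<^sup>2 < 1" using xyz by (simp add: u_def field_simps)
  moreover have "1 * 1 < q * w" using q1 by (intro mult_strict_mono) auto
  moreover have "p * (e * q + a * w) \<ge> 0" "a * e \<ge> 0" using p0 q1 abe by simp_all
  ultimately have "b * u\<^sup>2 - q * w - p * (e * q + a * w) - a * e < 0" by linarith
  also have "0 \<le> sqrt ((u\<^sup>2 + q\<^sup>2 + 2 * a * p * q + a\<^sup>2) * (u\<^sup>2 + w\<^sup>2 + 2 * e * p * w + e\<^sup>2))"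
    using p0 q1 abe by simp
  finally have "reduced_triangle a b e p q w u" unfolding reduced_triangle_def .
  thus ?thesis using hyp_edge_triangle_iff[OF abe xyz] by (simp add: p_def q_def w_def u_def)
qed

lemma mem_R_H: "(ri, rj, rk) \<in> R_H Iij Ijk Iki \<longleftrightarrow> ri > 0 \<and> rj > 0 \<and> rk > 0 \<and>
   hyp_edge Iij ri rj < hyp_edge Ijk rj rk + hyp_edge Iki rk ri \<and>
   hyp_edge Ijk rj rk < hyp_edge Iki rk ri + hyp_edge Iij ri rj \<and>
   hyp_edge Iki rk ri < hyp_edge Iij ri rj + hyp_edge Ijk rj rk"
  by (simp add: R_H_def strict_triangle_def)

definition rescale :: "real \<Rightarrow> real \<times> real \<times> real \<Rightarrow> real \<times> real \<times> real" where
  "rescale m r = (rescale_radius m (fst r), rescale_radius m (fst (snd r)), rescale_radius m (snd (snd r)))"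

lemma rescale_in_R_H:
  assumes I: "Iij \<ge> 0" "Ijk \<ge> 0" "Iki \<ge> 0" and r: "r \<in> R_H Iij Ijk Iki" and m: "m \<ge> 1"
  shows "rescale m r \<in> R_H Iij Ijk Iki"
proof -
  obtain ri rj rk where rr: "r = (ri, rj, rk)" by (cases r)
  note h = r[unfolded rr mem_R_H]
  let ?f = "rescale_radius m"
  have pos: "?f ri > 0" "?f rj > 0" "?f rk > 0" using rescale_radius_facts(1)[OF m] h by auto
  have ij: "hyp_edge Iij (?f ri) (?f rj) < hyp_edge Iki (?f rk) (?f ri) + hyp_edge Ijk (?f rj) (?f rk)"
    by (rule hyp_edge_triangle_rescale[OF I(3) I(1) I(2) _ _ _ m]) (use h in linarith)+
  have jk: "hyp_edge Ijk (?f rj) (?f rk) < hyp_edge Iij (?f ri) (?f rj) + hyp_edge Iki (?f rk) (?f ri)"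
    by (rule hyp_edge_triangle_rescale[OF I(1) I(2) I(3) _ _ _ m]) (use h in linarith)+
  have ki: "hyp_edge Iki (?f rk) (?f ri) < hyp_edge Ijk (?f rj) (?f rk) + hyp_edge Iij (?f ri) (?f rj)"
    by (rule hyp_edge_triangle_rescale[OF I(2) I(3) I(1) _ _ _ m]) (use h in linarith)+
  have eq: "rescale m r = (?f ri, ?f rj, ?f rk)" by (simp add: rescale_def rr)
  show ?thesis unfolding eq mem_R_H using pos ij jk ki by linarith
qed

lemma box_subset_R_H:
  assumes I: "Iij \<ge> 0" "Ijk \<ge> 0" "Iki \<ge> 0"
  defines "N \<equiv> arsinh (1 + Iij + Ijk + Iki)"
  shows "{N<..} \<times> {N<..} \<times> {N<..} \<subseteq> R_H Iij Ijk Iki"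
proof clarify
  fix ri rj rk assume r: "N < ri" "N < rj" "N < rk"
  have "0 < N" using I by (simp add: N_def)
  hence pos: "ri > 0" "rj > 0" "rk > 0" using r by linarith+
  have "1 + Iij + Ijk + Iki < sinh t" if "N < t" for t
    using that by (metis N_def sinh_arsinh_real sinh_real_less_iff)
  hence sh: "1 + Iij + Ijk + Iki < sinh ri" "1 + Iij + Ijk + Iki < sinh rj"
    "1 + Iij + Ijk + Iki < sinh rk" using r by blast+
  have "hyp_edge Iij ri rj < hyp_edge Iki rk ri + hyp_edge Ijk rj rk"
    by (rule hyp_edge_triangle_large[OF I(3) I(1) I(2) pos(3) pos(1) pos(2)]) (use sh I in linarith)
  moreover have "hyp_edge Ijk rj rk < hyp_edge Iij ri rj + hyp_edge Iki rk ri"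
    by (rule hyp_edge_triangle_large[OF I(1) I(2) I(3) pos(1) pos(2) pos(3)]) (use sh I in linarith)
  moreover have "hyp_edge Iki rk ri < hyp_edge Ijk rj rk + hyp_edge Iij ri rj"
    by (rule hyp_edge_triangle_large[OF I(2) I(3) I(1) pos(2) pos(3) pos(1)]) (use sh I in linarith)
  ultimately show "(ri, rj, rk) \<in> R_H Iij Ijk Iki" unfolding mem_R_H using pos by (simp add: add.commute)
qed

section \<open>Topology of R_H\<close>

text \<open>Continuity of arsinh and arcosh composed with functions on arbitrary
  topological spaces (the library states these for real domains only).\<close>

lemma continuous_on_arsinh_comp [continuous_intros]:
  fixes f :: "'a::topological_space \<Rightarrow> real"
  shows "continuous_on A f \<Longrightarrow> continuous_on A (\<lambda>x. arsinh (f x))"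
  by (rule continuous_on_compose2[OF continuous_on_arsinh]) auto

lemma continuous_on_arcosh_comp [continuous_intros]:
  fixes f :: "'a::topological_space \<Rightarrow> real"
  shows "continuous_on A f \<Longrightarrow> (\<And>x. x \<in> A \<Longrightarrow> f x \<ge> 1) \<Longrightarrow> continuous_on A (\<lambda>x. arcosh (f x))"
  by (rule continuous_on_compose2[OF continuous_on_arcosh[OF order_refl]]) auto

text \<open>R_H is the preimage of the open positive octant under the continuous map
  recording the three triangle slacks, restricted to the open positive octant.\<close>

lemma open_R_H:
  assumes I: "Iij \<ge> 0" "Ijk \<ge> 0" "Iki \<ge> 0"
  shows "open (R_H Iij Ijk Iki)"
proof -
  define Pos where "Pos = ({0<..} \<times> {0<..} \<times> {0<..} :: (real \<times> real \<times> real) set)"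
  define E1 E2 E3 where "E1 r = hyp_edge Iij (fst r) (fst (snd r))"
    and "E2 r = hyp_edge Ijk (fst (snd r)) (snd (snd r))"
    and "E3 r = hyp_edge Iki (snd (snd r)) (fst r)" for r :: "real \<times> real \<times> real"
  define slack where "slack r = (E2 r + E3 r - E1 r, E3 r + E1 r - E2 r, E1 r + E2 r - E3 r)" for r
  have "continuous_on Pos E1" "continuous_on Pos E2" "continuous_on Pos E3"
    unfolding E1_def E2_def E3_def hyp_edge_def Pos_def
    by (auto intro!: continuous_intros hyp_edge_arg_ge_1 simp: I less_imp_le)
  hence "continuous_on Pos slack" unfolding slack_def by (intro continuous_intros)
  hence "open (Pos \<inter> slack -` ({0<..} \<times> {0<..} \<times> {0<..}))"
    by (rule continuous_open_preimage) (simp_all add: Pos_def open_Times)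
  moreover have "R_H Iij Ijk Iki = Pos \<inter> slack -` ({0<..} \<times> {0<..} \<times> {0<..})"
    by (auto simp: R_H_def strict_triangle_def Pos_def slack_def E1_def E2_def E3_def)
  ultimately show ?thesis by simp
qed

lemma less_rescaled:
  fixes M s c :: real
  assumes "0 < s" "0 \<le> M" "M / s \<le> c"
  shows "M < (1 + c) * s"
proof -
  have "M \<le> c * s" using assms by (simp add: divide_le_eq)
  thus ?thesis using assms(1) by (simp add: algebra_simps)
qed

text \<open>A set is contractible if a homotopy inside it deforms the identity into a
  map with values in a nonempty convex subset: follow the homotopy, then the
  straight-line homotopy to a point of the convex subset.\<close>

lemma contractible_by_deformation_into_convex:
  fixes S C :: "'a::real_normed_vector set" and H :: "real \<times> 'a \<Rightarrow> 'a"
  assumes H_cont: "continuous_on ({0..1} \<times> S) H"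
    and H_in: "\<And>t x. t \<in> {0..1} \<Longrightarrow> x \<in> S \<Longrightarrow> H (t, x) \<in> S"
    and H0: "\<And>x. H (0, x) = x" and H1: "\<And>x. x \<in> S \<Longrightarrow> H (1, x) \<in> C"
    and C: "convex C" "C \<subseteq> S" "c \<in> C"
  shows "contractible S"
proof -
  have "homotopic_with_canon (\<lambda>f. True) S S id (\<lambda>x. H (1, x))"
    unfolding homotopic_with_def using H_cont H_in H0 by (intro exI[of _ H]) auto
  moreover have "homotopic_with_canon (\<lambda>f. True) S S (\<lambda>x. H (1, x)) (\<lambda>x. c)"
  proof (rule homotopic_with_linear)
    show "continuous_on S (\<lambda>x. H (1, x))"
      by (rule continuous_on_compose2[OF H_cont]) (auto intro!: continuous_intros)
    show "closed_segment (H (1, x)) c \<subseteq> S" if "x \<in> S" for x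
      using closed_segment_subset[OF H1[OF that] C(3,1)] C(2) by blast
  qed (rule continuous_on_const)
  ultimately show ?thesis
    unfolding contractible_def by (meson homotopic_with_trans)
qed

text \<open>Facts (1) and (2) combined: rescaling r by the factor 1 + K r, with K
  continuous on R_H, moves r into the box, and all intermediate factors keep it in R_H.\<close>

lemma contractible_R_H:
  assumes I: "Iij \<ge> 0" "Ijk \<ge> 0" "Iki \<ge> 0"
  shows "contractible (R_H Iij Ijk Iki)"
proof -
  let ?S = "R_H Iij Ijk Iki"
  define M where "M = 1 + Iij + Ijk + Iki"
  define Box where "Box = {arsinh M<..} \<times> {arsinh M<..} \<times> {arsinh M<..}"
  define K where "K r = M / sinh (fst r) + M / sinh (fst (snd r)) + M / sinh (snd (snd r))" for r
  define H where "H x = rescale (1 + fst x * K (snd x)) (snd x)" for x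
  have M0: "M \<ge> 0" using I by (simp add: M_def)
  have pos: "0 < fst r" "0 < fst (snd r)" "0 < snd (snd r)" if "r \<in> ?S" for r
    using that by (cases r; simp add: mem_R_H)+
  have sinh_nz: "sinh (fst r) \<noteq> 0" "sinh (fst (snd r)) \<noteq> 0" "sinh (snd (snd r)) \<noteq> 0"
    if "r \<in> ?S" for r
    using pos[OF that] by simp_all
  show ?thesis
  proof (rule contractible_by_deformation_into_convex)
    show "continuous_on ({0..1} \<times> ?S) H"
      unfolding H_def rescale_def rescale_radius_def K_def
      by (intro continuous_intros) (auto dest: sinh_nz)
    show "H (t, r) \<in> ?S" if "t \<in> {0..1}" "r \<in> ?S" for t r
      using that pos[OF that(2)] M0 unfolding H_def
      by (intro rescale_in_R_H[OF I]) (auto simp: K_def)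
    show "H (0, r) = r" for r
      by (simp add: H_def rescale_def rescale_radius_def arsinh_sinh_real)
    show "H (1, r) \<in> Box" if r: "r \<in> ?S" for r
    proof -
      have "M < (1 + K r) * sinh t" if "t \<in> {fst r, fst (snd r), snd (snd r)}" for t
        using that pos[OF r] M0 by (intro less_rescaled) (auto simp: K_def)
      thus ?thesis by (simp add: H_def rescale_def rescale_radius_def Box_def)
    qed
    show "convex Box" by (simp add: Box_def convex_Times)
    show "Box \<subseteq> ?S" unfolding Box_def M_def using box_subset_R_H[OF I] .
    show "(arsinh M + 1, arsinh M + 1, arsinh M + 1) \<in> Box" by (simp add: Box_def)
  qed
qed

theorem lemma3p1:
  fixes Iij Ijk Iki :: real
  assumes "Iij \<ge> 0" and "Ijk \<ge> 0" and "Iki \<ge> 0"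
  shows "R_H Iij Ijk Iki \<subseteq> {(ri, rj, rk). ri > 0 \<and> rj > 0 \<and> rk > 0}
    \<and> open (R_H Iij Ijk Iki) \<and> connected (R_H Iij Ijk Iki)
    \<and> simply_connected (R_H Iij Ijk Iki)"
proof -
  have "R_H Iij Ijk Iki \<subseteq> {(ri, rj, rk). ri > 0 \<and> rj > 0 \<and> rk > 0}"
    by (auto simp: R_H_def)
  moreover have "contractible (R_H Iij Ijk Iki)" using contractible_R_H assms .
  ultimately show ?thesis
    using open_R_H assms contractible_imp_connected contractible_imp_simply_connected by blast
qed

end
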